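(* Let $\lambda$ be a nonzero cardinal, let $X$ and $Y$ be sets, and let $\mathcal{T} = \langle T; \ell^{\mathcal{T}}\rangle$ and $\mathcal{U} = \langle U; \ell^{\mathcal{U}}\rangle$ be $\lambda$-labeled trees with $T \subset X^{<\omega}$ and $U \subset Y^{<\omega}$. Then there is no homomorphism from $\mathcal{T}$ to $\mathcal{U}$ if and only if player I has a winning strategy in the game $G(\mathcal{T},\mathcal{U})$.
   Context: For a set $X$, $X^{<\omega}$ is the set of finite sequences from $X$. A tree on $X$ is a nonempty subset of $X^{<\omega}$ closed under initial segments; its root is the empty sequence $\langle\rangle$. A $\lambda$-labeled tree is a structure $\mathcal{T} = \langle T; \ell^{\mathcal{T}}\rangle$ where $T$ is a tree on some set and $\ell^{\mathcal{T}} : T \to \lambda$. A homomorphism of trees is a function from one tree to another preserving lengths of sequences and the initial-segment relation; a homomorphism of $\lambda$-labeled trees $\mathcal{T}\to\mathcal{U}$ is a tree homomorphism $h : T \to U$ with $\ell^{\mathcal{U}}\circ h = \ell^{\mathcal{T}}$. The game $G(\mathcal{T},\mathcal{U})$: players I and II alternately play $x_0, y_0, x_1, y_1, \ldots$ with $x_n \in X$, $y_n \in Y$, for $\omega$ rounds, subject to the rules, for all $n<\omega$: (I) $\langle x_0,\ldots,x_n\rangle \in T$; (II) $\langle y_0,\ldots,y_n\rangle \in U$; (II) $\ell^{\mathcal{U}}(\langle y_0,\ldots,y_n\rangle) = \ell^{\mathcal{T}}(\langle x_0,\ldots,x_n\rangle)$. The first player to break a rule loses; if both follow the rules forever, player II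 wins. If the roots of $\mathcal{T}$ and $\mathcal{U}$ have different labels, player II loses immediately. A winning strategy for player I is a function $\Sigma : Y^{<\omega} \to X$ such that for every sequence $\langle y_n : n<\omega\rangle$ of moves of player II, if $x_n = \Sigma(\langle y_0,\ldots,y_{n-1}\rangle)$ for all $n<\omega$, then player I wins. *)

theory Defs
  imports Main "HOL-Library.Sublist"
begin

text \<open>Finite sequences are lists. The sets X, Y are the types 'x, 'y; the label set
  (the nonzero cardinal lambda) is the (nonempty) type 'l.\<close>

definition is_tree :: "'x list set \<Rightarrow> bool" where
  "is_tree T \<longleftrightarrow> T \<noteq> {} \<and> (\<forall>t\<in>T. \<forall>s. prefix s t \<longrightarrow> s \<in> T)"

definition labeled_tree_hom ::
  "'x list set \<Rightarrow> ('x list \<Rightarrow> 'l) \<Rightarrow> 'y list set \<Rightarrow> ('y list \<Rightarrow> 'l) \<Rightarrow> ('x list \<Rightarrow> 'y list) \<Rightarrow> bool" where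
  "labeled_tree_hom T lT U lU h \<longleftrightarrow>
     (\<forall>s\<in>T. h s \<in> U) \<and>
     (\<forall>s\<in>T. length (h s) = length s) \<and>
     (\<forall>s\<in>T. \<forall>t\<in>T. prefix s t \<longrightarrow> prefix (h s) (h t)) \<and>
     (\<forall>s\<in>T. lU (h s) = lT s)"

text \<open>Player I wins the play x_0, y_0, x_1, y_1, ... of G(T,U): either the roots have
  different labels, or at some round n player I has obeyed his rule in rounds 0..n and
  player II has broken one of her rules at round n (taking the least such n, II obeyed
  her rules in all earlier rounds, so II is the first to break a rule).\<close>
definition player_I_wins_play ::
  "'x list set \<Rightarrow> ('x list \<Rightarrow> 'l) \<Rightarrow> 'y list set \<Rightarrow> ('y list \<Rightarrow> 'l) \<Rightarrow> (nat \<Rightarrow> 'x) \<Rightarrow> (nat \<Rightarrow> 'y) \<Rightarrow> bool" where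
  "player_I_wins_play T lT U lU xs ys \<longleftrightarrow>
     lU [] \<noteq> lT [] \<or>
     (\<exists>n. (\<forall>m\<le>n. map xs [0..<Suc m] \<in> T) \<and>
          \<not> (map ys [0..<Suc n] \<in> U \<and> lU (map ys [0..<Suc n]) = lT (map xs [0..<Suc n])))"

definition winning_strategy_I ::
  "'x list set \<Rightarrow> ('x list \<Rightarrow> 'l) \<Rightarrow> 'y list set \<Rightarrow> ('y list \<Rightarrow> 'l) \<Rightarrow> ('y list \<Rightarrow> 'x) \<Rightarrow> bool" where
  "winning_strategy_I T lT U lU \<Sigma> \<longleftrightarrow>
     (\<forall>ys :: nat \<Rightarrow> 'y. player_I_wins_play T lT U lU (\<lambda>n. \<Sigma> (map ys [0..<n])) ys)"

end

theory Submission
  imports Defs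
begin

text \<open>
  The positions from which player I can force a win are generated inductively: those at
  which II has just broken a rule, and those where I has a legal move all of whose answers
  lead to such positions. If the initial position is of this kind, unwinding the induction
  gives I a winning strategy. Otherwise II can always answer so as to avoid these positions,
  and doing so along every branch of T defines a homomorphism. Conversely, a homomorphism h
  lets II answer each sequence s of moves of I by the last entry of h s; she then never
  breaks a rule, so I has no winning strategy.
\<close>

lemma is_tree_Nil: "is_tree T \<Longrightarrow> [] \<in> T"
  unfolding is_tree_def by (metis Nil_prefix ex_in_conv)

lemma is_tree_appendD: "is_tree T \<Longrightarrow> s @ u \<in> T \<Longrightarrow> s \<in> T"
  unfolding is_tree_def by (metis prefixI)

lemma labeled_tree_hom_Nil:
  assumes "is_tree T" and "labeled_tree_hom T lT U lU h"
  shows "h [] = []" and "lU [] = lT []"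
  using assms is_tree_Nil[OF assms(1)] unfolding labeled_tree_hom_def by (metis length_0_conv)+

lemma labeled_tree_hom_snoc:
  assumes "is_tree T" and hom: "labeled_tree_hom T lT U lU h" and "s @ [x] \<in> T"
  shows "h (s @ [x]) = h s @ [last (h (s @ [x]))]"
proof -
  have "s \<in> T" using assms is_tree_appendD by blast
  then have "prefix (h s) (h (s @ [x]))" and "length (h (s @ [x])) = Suc (length (h s))"
    using hom \<open>s @ [x] \<in> T\<close> unfolding labeled_tree_hom_def by auto
  then obtain zs where "h (s @ [x]) = h s @ zs" and "length zs = 1"
    by (auto elim: prefixE)
  then show ?thesis by (auto simp: length_Suc_conv)
qed

lemma labeled_tree_hom_along_play:
  assumes "is_tree T" and "labeled_tree_hom T lT U lU h"
    and answers: "\<And>n. ys n = last (h (map xs [0..<Suc n]))"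
  shows "map xs [0..<n] \<in> T \<Longrightarrow> map ys [0..<n] = h (map xs [0..<n])"
proof (induction n)
  case 0
  then show ?case using labeled_tree_hom_Nil[OF assms(1,2)] by simp
next
  case (Suc n)
  have snoc: "map xs [0..<Suc n] = map xs [0..<n] @ [xs n]" by simp
  with Suc.prems have "map xs [0..<n] \<in> T" using is_tree_appendD[OF assms(1)] by metis
  have "map ys [0..<Suc n] = h (map xs [0..<n]) @ [ys n]"
    using Suc.IH[OF \<open>map xs [0..<n] \<in> T\<close>] by simp
  also have "\<dots> = h (map xs [0..<Suc n])"
    using labeled_tree_hom_snoc[OF assms(1,2), of "map xs [0..<n]" "xs n"] answers[of n] Suc.prems
    unfolding snoc by metis
  finally show ?case .
qed

lemma exists_seq_prefix_rec: "\<exists>ys. \<forall>n. ys n = F (map ys [0..<n])"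
proof -
  define p where "p = rec_nat [] (\<lambda>_ r. r @ [F r])"
  have p_map: "map (\<lambda>n. F (p n)) [0..<n] = p n" for n
    by (induction n) (simp_all add: p_def)
  show ?thesis
    by (rule exI[of _ "\<lambda>n. F (p n)"]) (simp add: p_map)
qed

lemma exists_play_against_strategy:
  fixes \<Sigma> :: "'y list \<Rightarrow> 'x" and \<rho> :: "'x list \<Rightarrow> 'y"
  shows "\<exists>ys. \<forall>n. ys n = \<rho> (map (\<lambda>k. \<Sigma> (map ys [0..<k])) [0..<Suc n])"
proof -
  obtain ys where ys: "\<forall>n. ys n = \<rho> (map (\<lambda>k. \<Sigma> (take k (map ys [0..<n]))) [0..<Suc n])"
    using exists_seq_prefix_rec[of "\<lambda>r. \<rho> (map (\<lambda>k. \<Sigma> (take k r)) [0..<Suc (length r)])"]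
    by auto
  moreover have "map (\<lambda>k. \<Sigma> (take k (map ys [0..<n]))) [0..<Suc n] =
      map (\<lambda>k. \<Sigma> (map ys [0..<k])) [0..<Suc n]" for n
    by (rule map_cong) (auto simp: take_map take_upt)
  ultimately have "\<forall>n. ys n = \<rho> (map (\<lambda>k. \<Sigma> (map ys [0..<k])) [0..<Suc n])"
    by (simp del: upt_Suc)
  then show ?thesis by blast
qed

lemma labeled_tree_hom_imp_no_winning_strategy_I:
  assumes "is_tree T" and hom: "labeled_tree_hom T lT U lU h"
  shows "\<not> winning_strategy_I T lT U lU \<Sigma>"
proof
  assume "winning_strategy_I T lT U lU \<Sigma>"
  obtain ys where ys: "\<And>n. ys n = last (h (map (\<lambda>k. \<Sigma> (map ys [0..<k])) [0..<Suc n]))"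
    using exists_play_against_strategy[of "\<lambda>s. last (h s)" \<Sigma>] by blast
  define xs where "xs = (\<lambda>k. \<Sigma> (map ys [0..<k]))"
  have answers: "ys n = last (h (map xs [0..<Suc n]))" for n
    unfolding xs_def by (rule ys)
  have "player_I_wins_play T lT U lU xs ys"
    using \<open>winning_strategy_I T lT U lU \<Sigma>\<close> unfolding winning_strategy_I_def xs_def by blast
  then obtain n where A: "map xs [0..<Suc n] \<in> T"
    and lost: "\<not> (map ys [0..<Suc n] \<in> U \<and> lU (map ys [0..<Suc n]) = lT (map xs [0..<Suc n]))"
    using labeled_tree_hom_Nil[OF assms] unfolding player_I_wins_play_def by blast
  have "h (map xs [0..<Suc n]) \<in> U \<and> lU (h (map xs [0..<Suc n])) = lT (map xs [0..<Suc n])"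
    using hom A unfolding labeled_tree_hom_def by blast
  then show False
    using lost labeled_tree_hom_along_play[OF assms answers A] by simp
qed

text \<open>A position \<open>(s, t)\<close> records the moves of player I and of player II made so far.\<close>

inductive winning_position_I ::
  "'x list set \<Rightarrow> ('x list \<Rightarrow> 'l) \<Rightarrow> 'y list set \<Rightarrow> ('y list \<Rightarrow> 'l) \<Rightarrow> 'x list \<Rightarrow> 'y list \<Rightarrow> bool"
  for T lT U lU
where
  illegal_answer: "\<not> (t \<in> U \<and> lU t = lT s) \<Longrightarrow> winning_position_I T lT U lU s t"
| winning_move: "s @ [x] \<in> T \<Longrightarrow> (\<And>y. winning_position_I T lT U lU (s @ [x]) (t @ [y]))
    \<Longrightarrow> winning_position_I T lT U lU s t"

definition player_I_wins_play_from ::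
  "'x list set \<Rightarrow> ('x list \<Rightarrow> 'l) \<Rightarrow> 'y list set \<Rightarrow> ('y list \<Rightarrow> 'l) \<Rightarrow> 'x list \<Rightarrow> 'y list
    \<Rightarrow> (nat \<Rightarrow> 'x) \<Rightarrow> (nat \<Rightarrow> 'y) \<Rightarrow> bool" where
  "player_I_wins_play_from T lT U lU s t xs ys \<longleftrightarrow>
     \<not> (t \<in> U \<and> lU t = lT s) \<or>
     (\<exists>n. (\<forall>m\<le>n. s @ map xs [0..<Suc m] \<in> T) \<and>
          \<not> (t @ map ys [0..<Suc n] \<in> U \<and>
             lU (t @ map ys [0..<Suc n]) = lT (s @ map xs [0..<Suc n])))"

lemma player_I_wins_play_from_Nil:
  "[] \<in> U \<Longrightarrow> player_I_wins_play_from T lT U lU [] [] xs ys \<longleftrightarrow> player_I_wins_play T lT U lU xs ys"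
  unfolding player_I_wins_play_from_def player_I_wins_play_def by simp

lemma append_map_upt_Suc: "s @ map f [0..<Suc n] = (s @ [f 0]) @ map (\<lambda>i. f (Suc i)) [0..<n]"
  by (simp add: map_upt_Suc del: upt_Suc)

lemma player_I_wins_play_from_shift:
  assumes "s @ [xs 0] \<in> T"
    and "player_I_wins_play_from T lT U lU (s @ [xs 0]) (t @ [ys 0]) (\<lambda>n. xs (Suc n)) (\<lambda>n. ys (Suc n))"
  shows "player_I_wins_play_from T lT U lU s t xs ys"
proof (cases "t @ [ys 0] \<in> U \<and> lU (t @ [ys 0]) = lT (s @ [xs 0])")
  case False
  with assms(1) show ?thesis
    unfolding player_I_wins_play_from_def by (intro disjI2 exI[of _ 0]) simp
next
  case True
  with assms(2) obtain n where
    moves: "\<forall>m\<le>n. (s @ [xs 0]) @ map (\<lambda>i. xs (Suc i)) [0..<Suc m] \<in> T" and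
    lost: "\<not> ((t @ [ys 0]) @ map (\<lambda>i. ys (Suc i)) [0..<Suc n] \<in> U \<and>
        lU ((t @ [ys 0]) @ map (\<lambda>i. ys (Suc i)) [0..<Suc n]) =
        lT ((s @ [xs 0]) @ map (\<lambda>i. xs (Suc i)) [0..<Suc n]))"
    unfolding player_I_wins_play_from_def by blast
  have "s @ map xs [0..<Suc m] \<in> T" if "m \<le> Suc n" for m
  proof (cases m)
    case 0
    then show ?thesis using assms(1) by simp
  next
    case (Suc k)
    then show ?thesis
      using moves that append_map_upt_Suc[of s xs "Suc k"] by (simp del: upt_Suc)
  qed
  moreover have "\<not> (t @ map ys [0..<Suc (Suc n)] \<in> U \<and>
      lU (t @ map ys [0..<Suc (Suc n)]) = lT (s @ map xs [0..<Suc (Suc n)]))"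
    unfolding append_map_upt_Suc[of _ _ "Suc n"] by (rule lost)
  ultimately show ?thesis
    unfolding player_I_wins_play_from_def by blast
qed

lemma winning_position_I_imp_strategy:
  assumes "winning_position_I T lT U lU s t"
  shows "\<exists>\<sigma>. \<forall>ys. player_I_wins_play_from T lT U lU s t (\<lambda>n. \<sigma> (map ys [0..<n])) ys"
  using assms
proof (induction rule: winning_position_I.induct)
  case (illegal_answer t s)
  then show ?case unfolding player_I_wins_play_from_def by blast
next
  case (winning_move s x t)
  have "\<forall>y. \<exists>\<sigma>. \<forall>ys. player_I_wins_play_from T lT U lU (s @ [x]) (t @ [y])
      (\<lambda>n. \<sigma> (map ys [0..<n])) ys"
    using winning_move.IH by blast
  from choice[OF this] obtain S where
    S: "\<And>y ys. player_I_wins_play_from T lT U lU (s @ [x]) (t @ [y]) (\<lambda>n. S y (map ys [0..<n])) ys"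
    by blast
  define \<sigma> where "\<sigma> r = (case r of [] \<Rightarrow> x | y # r' \<Rightarrow> S y r')" for r
  have "player_I_wins_play_from T lT U lU s t (\<lambda>n. \<sigma> (map ys [0..<n])) ys" for ys
  proof (rule player_I_wins_play_from_shift)
    show "s @ [\<sigma> (map ys [0..<0])] \<in> T"
      using winning_move.hyps(1) by (simp add: \<sigma>_def)
    have "(\<lambda>n. \<sigma> (map ys [0..<Suc n])) = (\<lambda>n. S (ys 0) (map (\<lambda>i. ys (Suc i)) [0..<n]))"
      by (simp add: \<sigma>_def map_upt_Suc del: upt_Suc)
    then show "player_I_wins_play_from T lT U lU (s @ [\<sigma> (map ys [0..<0])]) (t @ [ys 0])
        (\<lambda>n. \<sigma> (map ys [0..<Suc n])) (\<lambda>n. ys (Suc n))"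
      using S[of "ys 0" "\<lambda>n. ys (Suc n)"] by (simp add: \<sigma>_def)
  qed
  then show ?case by blast
qed

lemma exists_prefix_mono_length_map:
  assumes "is_tree T" and "P [] []"
    and extend: "\<And>s t x. P s t \<Longrightarrow> s @ [x] \<in> T \<Longrightarrow> \<exists>y. P (s @ [x]) (t @ [y])"
  shows "\<exists>h. (\<forall>s\<in>T. P s (h s) \<and> length (h s) = length s) \<and>
             (\<forall>s t. prefix s t \<longrightarrow> prefix (h s) (h t))"
proof -
  define c where "c s t = (SOME y. P s (t @ [y]))" for s t
  \<comment> \<open>structural recursion on \<open>rev s\<close>, i.e. along \<open>s @ [x]\<close>\<close>
  define h where "h s = rec_list [] (\<lambda>x r t. t @ [c (rev (x # r)) t]) (rev s)" for s
  have h_Nil: "h [] = []" and h_snoc: "h (s @ [x]) = h s @ [c (s @ [x]) (h s)]" for s x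
    by (simp_all add: h_def)
  have "P s (h s) \<and> length (h s) = length s" if "s \<in> T" for s
    using that
  proof (induction s rule: rev_induct)
    case Nil
    then show ?case using \<open>P [] []\<close> by (simp add: h_Nil)
  next
    case (snoc x s)
    then have "P s (h s)" and "length (h s) = length s"
      using is_tree_appendD[OF \<open>is_tree T\<close>] by blast+
    have "P (s @ [x]) (h s @ [c (s @ [x]) (h s)])"
      unfolding c_def by (rule someI_ex[OF extend[OF \<open>P s (h s)\<close> snoc.prems]])
    then show ?case using \<open>length (h s) = length s\<close> by (simp add: h_snoc)
  qed
  moreover have "prefix (h s) (h (s @ u))" for s u
    by (induction u rule: rev_induct) (auto simp: h_snoc simp flip: append_assoc)
  then have "prefix s t \<Longrightarrow> prefix (h s) (h t)" for s t
    by (auto elim: prefixE)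
  ultimately show ?thesis by blast
qed

lemma not_winning_position_I_imp_labeled_tree_hom:
  fixes T :: "'x list set"
  assumes "is_tree T" and "\<not> winning_position_I T lT U lU [] []"
  shows "\<exists>h. labeled_tree_hom T lT U lU h"
proof -
  let ?P = "\<lambda>s t. \<not> winning_position_I T lT U lU s t"
  have extend: "\<exists>y. ?P (s @ [x]) (t @ [y])" if "?P s t" and "s @ [x] \<in> T" for s t x
  proof (rule ccontr)
    assume "\<nexists>y. ?P (s @ [x]) (t @ [y])"
    with \<open>s @ [x] \<in> T\<close> have "winning_position_I T lT U lU s t"
      by (intro winning_move[of s x]) auto
    with \<open>?P s t\<close> show False ..
  qed
  obtain h where inv: "\<forall>s\<in>T. ?P s (h s) \<and> length (h s) = length s"
    and mono: "\<forall>s t. prefix s t \<longrightarrow> prefix (h s) (h t)"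
    using exists_prefix_mono_length_map[of T ?P, OF assms extend] by blast
  have "labeled_tree_hom T lT U lU h"
    unfolding labeled_tree_hom_def
  proof (intro conjI ballI impI)
    fix s assume "s \<in> T"
    with inv have "?P s (h s)" and "length (h s) = length s" by auto
    then show "h s \<in> U" and "lU (h s) = lT s" and "length (h s) = length s"
      using illegal_answer by blast+
  next
    fix s t :: "'x list" assume "prefix s t"
    with mono show "prefix (h s) (h t)" by blast
  qed
  then show ?thesis by blast
qed

theorem lemma2p4:
  fixes T :: "'x list set" and U :: "'y list set"
    and lT :: "'x list \<Rightarrow> 'l" and lU :: "'y list \<Rightarrow> 'l"
  assumes "is_tree T" and "is_tree U"
  shows "(\<not> (\<exists>h. labeled_tree_hom T lT U lU h)) \<longleftrightarrow>
         (\<exists>\<Sigma>. winning_strategy_I T lT U lU \<Sigma>)"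
proof
  assume "\<not> (\<exists>h. labeled_tree_hom T lT U lU h)"
  then have "winning_position_I T lT U lU [] []"
    using not_winning_position_I_imp_labeled_tree_hom[OF assms(1)] by blast
  then obtain \<sigma> where "player_I_wins_play_from T lT U lU [] [] (\<lambda>n. \<sigma> (map ys [0..<n])) ys" for ys
    using winning_position_I_imp_strategy by blast
  then have "winning_strategy_I T lT U lU \<sigma>"
    unfolding winning_strategy_I_def
    using player_I_wins_play_from_Nil[OF is_tree_Nil[OF assms(2)]] by blast
  then show "\<exists>\<Sigma>. winning_strategy_I T lT U lU \<Sigma>" by blast
next
  assume "\<exists>\<Sigma>. winning_strategy_I T lT U lU \<Sigma>"
  then show "\<not> (\<exists>h. labeled_tree_hom T lT U lU h)"
    using labeled_tree_hom_imp_no_winning_strategy_I[OF assms(1)] by blast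
qed

end
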